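(* Let $\xi$ be a quadratic irrational real number and let $n\ge1$ be an integer. There is a constant $c>0$, depending only on $\xi$ and $n$, such that for every algebraic integer $\alpha$ of degree $n+1$ whose conjugates $\alpha_1,\dots,\alpha_{n+1}$ are all distinct from $\xi$, and for every ordering of these conjugates, one has \[ \max_{1\le i\le n} |\xi-\alpha_i| \ge c\, H(\alpha)^{-2/n}. \]
   Context: The height $H(\alpha)$ of an algebraic number $\alpha\in\mathbb{C}$ is the largest absolute value of the coefficients of its irreducible (minimal) polynomial in $\mathbb{Z}[T]$. The conjugates of $\alpha$ are the roots of this polynomial. An algebraic integer is a root of a monic polynomial in $\mathbb{Z}[T]$. *)

theory Defs
  imports "HOL-Computational_Algebra.Computational_Algebra"
begin

definition min_int_poly :: "complex \<Rightarrow> int poly" where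
  "min_int_poly \<alpha> = (THE p. irreducible p \<and> lead_coeff p > 0 \<and>
       poly (map_poly of_int p) \<alpha> = 0)"

definition height :: "complex \<Rightarrow> int" where
  "height \<alpha> = Max ((\<lambda>i. \<bar>coeff (min_int_poly \<alpha>) i\<bar>) ` {..degree (min_int_poly \<alpha>)})"

definition conjugates :: "complex \<Rightarrow> complex set" where
  "conjugates \<alpha> = {z. poly (map_poly of_int (min_int_poly \<alpha>)) z = 0}"

definition algebraic_degree :: "complex \<Rightarrow> nat" where
  "algebraic_degree \<alpha> = degree (min_int_poly \<alpha>)"

definition algebraic_integer :: "complex \<Rightarrow> bool" where
  "algebraic_integer \<alpha> \<longleftrightarrow> (\<exists>p :: int poly. lead_coeff p = 1 \<and> poly (map_poly of_int p) \<alpha> = 0)"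

definition quadratic_irrational :: "real \<Rightarrow> bool" where
  "quadratic_irrational \<xi> \<longleftrightarrow> \<xi> \<notin> \<rat> \<and>
     (\<exists>p :: int poly. degree p = 2 \<and> poly (map_poly of_int p) \<xi> = 0)"

end

theory Submission
  imports Defs "Subresultants.More_Homomorphisms"
begin

(*
  Let P be the minimal polynomial of the algebraic integer alpha; it is monic of
  degree n+1 and, having the n+1 conjugates as distinct roots, it factors as the product of
  (x - alpha_i).  The quadratic irrational xi is a root of an integer quadratic
  a T^2 + b T + c whose other root eta is irrational too.  Reducing P modulo this quadratic
  gives a^(n+1) P(z) = A + B z at both roots, so a^(2n+3) P(xi) P(eta) is an integer (the
  norm of A + B xi); it is nonzero because xi is not a conjugate, hence
  |P(xi)| |P(eta)| >= |a|^-(2n+3).  Conversely, with delta the largest distance from xi to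
  alpha_1, ..., alpha_n and the last conjugate bounded by the Cauchy bound (n+1) H, the
  factorisation gives |P(xi)| |P(eta)| <= delta^n (|xi - eta| + delta)^n E H^2.  Comparing
  both bounds yields delta >= c H^(-2/n).
*)

lemma int_poly_root_imp_degree_pos:
  fixes p :: "int poly" and z :: complex
  assumes "p \<noteq> 0" and "poly (of_int_poly p) z = 0"
  shows "0 < degree p"
proof (rule ccontr)
  assume "\<not> 0 < degree p"
  then obtain c where "p = [:c:]" by (metis degree_eq_zeroE neq0_conv)
  with assms show False by simp
qed

text \<open>An algebraic integer is a root of a monic irreducible integer polynomial: take the
  prime factor of a monic witness that vanishes at it.\<close>
lemma algebraic_integer_monic_irreducible:
  assumes "algebraic_integer \<alpha>"
  obtains q :: "int poly" where "irreducible q" "lead_coeff q = 1" "poly (of_int_poly q) \<alpha> = 0"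
proof -
  from assms obtain f :: "int poly" where f: "lead_coeff f = 1" "poly (of_int_poly f) \<alpha> = 0"
    unfolding algebraic_integer_def by auto
  have f0: "f \<noteq> 0" using f by auto
  have "normalize (prod_mset (prime_factorization f)) = f"
    using prod_mset_prime_factorization_weak[OF f0] f by (simp add: normalize_monic)
  then have "prod_mset (prime_factorization f) = unit_factor (prod_mset (prime_factorization f)) * f"
    by (metis unit_factor_mult_normalize)
  then have "poly (of_int_poly (prod_mset (prime_factorization f))) \<alpha> = 0"
    using f(2) by (metis of_int_poly_hom.hom_mult poly_mult mult_zero_right)
  then have "(\<Prod>q\<in>#prime_factorization f. poly (of_int_poly q) \<alpha>) = 0"
    by (simp only: of_int_poly_hom.hom_prod_mset poly_prod_mset)
  then obtain q where q: "q \<in># prime_factorization f" "poly (of_int_poly q) \<alpha> = 0"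
    by (auto simp: prod_mset_zero_iff)
  then have "prime q" "q dvd f" by (auto simp: in_prime_factors_iff)
  then obtain t where "f = q * t" by (auto elim: dvdE)
  then have "lead_coeff q dvd 1" using f(1) by (metis dvd_triv_left lead_coeff_mult)
  moreover have "unit_factor (lead_coeff q) = 1"
    using \<open>prime q\<close> unit_factor_normalize[of q] by (auto simp: prime_def unit_factor_poly_def)
  ultimately have "lead_coeff q = 1" by (auto simp: sgn_if zdvd1_eq split: if_splits)
  moreover have "irreducible q"
    using \<open>prime q\<close> by (simp add: prime_elem_imp_irreducible prime_def)
  ultimately show thesis using that q(2) by blast
qed

text \<open>An irreducible integer polynomial divides every nonzero integer polynomial of least
  degree with the same root: pseudo-division leaves a remainder that vanishes there too.\<close>
lemma irreducible_dvd_least_degree_root_poly: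
  fixes m r :: "int poly" and \<alpha> :: complex
  assumes m: "m \<noteq> 0" "poly (of_int_poly m) \<alpha> = 0"
    and least: "\<And>g. g \<noteq> 0 \<Longrightarrow> poly (of_int_poly g) \<alpha> = 0 \<Longrightarrow> degree m \<le> degree g"
    and r: "irreducible r" "poly (of_int_poly r) \<alpha> = 0"
  shows "r dvd m"
proof -
  obtain a t where a: "a \<noteq> 0" and div: "Polynomial.smult a r = m * t + pseudo_mod r m"
    and rem: "pseudo_mod r m = 0 \<or> degree (pseudo_mod r m) < degree m"
    using pseudo_mod[OF m(1), of r] by blast
  have "poly (of_int_poly (pseudo_mod r m)) \<alpha> = 0"
    using arg_cong[OF div, of "\<lambda>p. poly (of_int_poly p) \<alpha>"] m(2) r(2)
    by (simp add: of_int_poly_hom.hom_mult of_int_poly_hom.hom_add of_int_hom.map_poly_hom_smult)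
  then have "pseudo_mod r m = 0" using rem least by force
  with div have div': "Polynomial.smult a r = m * t" by simp
  then have "r dvd m * t" by (metis dvd_smult dvd_refl)
  moreover have "\<not> r dvd t"
  proof
    assume "r dvd t"
    then obtain s where "t = r * s" by (auto elim: dvdE)
    with div' have "r * [:a:] = r * (m * s)" by (simp add: algebra_simps)
    moreover have "r \<noteq> 0" using r(1) by auto
    ultimately have "[:a:] = m * s" by (metis mult_left_cancel)
    then have "degree m = 0" using a m(1) by (metis degree_mult_eq degree_pCons_0 add_is_0 mult_zero_right pCons_eq_0_iff)
    then show False using int_poly_root_imp_degree_pos[OF m] by simp
  qed
  ultimately show ?thesis
    using r(1) irreducible_imp_prime_poly prime_elem_dvd_mult_iff by blast
qed

lemma irreducible_common_root_dvd:
  fixes p q :: "int poly" and \<alpha> :: complex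
  assumes p: "irreducible p" "poly (of_int_poly p) \<alpha> = 0"
    and q: "irreducible q" "poly (of_int_poly q) \<alpha> = 0"
  shows "q dvd p"
proof -
  have p0: "p \<noteq> 0" using p by auto
  obtain m :: "int poly" where m: "m \<noteq> 0 \<and> poly (of_int_poly m) \<alpha> = 0"
    and least: "\<And>g. g \<noteq> 0 \<and> poly (of_int_poly g) \<alpha> = 0 \<Longrightarrow> degree m \<le> degree g"
    using ex_has_least_nat[of "\<lambda>g. g \<noteq> 0 \<and> poly (of_int_poly g) \<alpha> = 0" p degree] p0 p(2)
    by blast
  have "p dvd m" using m least p by (intro irreducible_dvd_least_degree_root_poly) auto
  then obtain u where u: "m = p * u" by (auto elim: dvdE)
  have "degree m \<le> degree p" using least p0 p(2) by blast
  then have "degree u = 0" using u m p0 by (simp add: degree_mult_eq)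
  have "q dvd p * u" using u m least q by (metis irreducible_dvd_least_degree_root_poly)
  moreover have "\<not> q dvd u"
  proof
    assume "q dvd u"
    then have "degree q \<le> 0" using \<open>degree u = 0\<close> u m by (metis dvd_imp_degree_le mult_zero_right)
    then show False using int_poly_root_imp_degree_pos[of q] q by auto
  qed
  ultimately show ?thesis
    using q(1) irreducible_imp_prime_poly prime_elem_dvd_mult_iff by blast
qed

text \<open>Hence an irreducible integer polynomial with positive leading coefficient is determined
  by any of its complex roots; this makes \<open>min_int_poly\<close> well defined.\<close>
lemma irreducible_root_poly_unique:
  fixes p q :: "int poly" and \<alpha> :: complex
  assumes p: "irreducible p" "lead_coeff p > 0" "poly (of_int_poly p) \<alpha> = 0"
    and q: "irreducible q" "lead_coeff q > 0" "poly (of_int_poly q) \<alpha> = 0"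
  shows "p = q"
proof (rule associated_eqI)
  show "p dvd q" "q dvd p" using p q by (auto intro: irreducible_common_root_dvd)
  show "normalize p = p" "normalize q = q"
    using p(2) q(2) by (simp_all add: normalize_poly_eq_map_poly)
qed

lemma min_int_poly_algebraic_integer:
  assumes "algebraic_integer \<alpha>"
  shows "irreducible (min_int_poly \<alpha>)" "lead_coeff (min_int_poly \<alpha>) = 1"
    "poly (of_int_poly (min_int_poly \<alpha>)) \<alpha> = 0"
proof -
  obtain q where q: "irreducible q" "lead_coeff q = 1" "poly (of_int_poly q) \<alpha> = 0"
    using algebraic_integer_monic_irreducible[OF assms] by blast
  have "min_int_poly \<alpha> = q"
    unfolding min_int_poly_def
  proof (rule the_equality)
    show "irreducible q \<and> lead_coeff q > 0 \<and> poly (of_int_poly q) \<alpha> = 0" using q by simp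
    show "p = q" if "irreducible p \<and> lead_coeff p > 0 \<and> poly (of_int_poly p) \<alpha> = 0" for p
      using that q by (intro irreducible_root_poly_unique[of p \<alpha> q]) auto
  qed
  with q show "irreducible (min_int_poly \<alpha>)" "lead_coeff (min_int_poly \<alpha>) = 1"
    "poly (of_int_poly (min_int_poly \<alpha>)) \<alpha> = 0" by simp_all
qed

lemma height_bounds:
  assumes "algebraic_integer \<alpha>"
  shows "\<bar>coeff (min_int_poly \<alpha>) i\<bar> \<le> height \<alpha>" and "1 \<le> height \<alpha>"
proof -
  let ?P = "min_int_poly \<alpha>"
  have le_height: "\<bar>coeff ?P j\<bar> \<le> height \<alpha>" if "j \<le> degree ?P" for j
    unfolding height_def using that by (intro Max_ge) auto
  show "1 \<le> height \<alpha>"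
    using le_height[of "degree ?P"] min_int_poly_algebraic_integer(2)[OF assms] by simp
  then show "\<bar>coeff ?P i\<bar> \<le> height \<alpha>"
    using le_height[of i] coeff_eq_0[of ?P i] by (cases "i \<le> degree ?P") auto
qed

lemma monic_poly_prod_distinct_roots:
  fixes p :: "complex poly"
  assumes monic: "lead_coeff p = 1" and card_roots: "card {z. poly p z = 0} = degree p"
  shows "poly p x = (\<Prod>z\<in>{z. poly p z = 0}. x - z)"
proof -
  define S where "S = {z. poly p z = 0}"
  define M where "M = proots p"
  have p0: "p \<noteq> 0" using monic by auto
  have set_M: "set_mset M = S" unfolding M_def S_def using set_count_proots[OF p0] .
  have "finite S" unfolding S_def using poly_roots_finite[OF p0] .
  have "size M = card S" unfolding M_def S_def using size_proots_complex card_roots by simp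
  have simple: "count M z = 1" if "z \<in> S" for z
  proof (rule ccontr)
    assume "count M z \<noteq> 1"
    moreover have "count M z \<noteq> 0" using that set_M by (metis count_eq_zero_iff)
    ultimately have "1 < count M z" by linarith
    then have "(\<Sum>w\<in>S. (1::nat)) < (\<Sum>w\<in>S. count M w)"
      using \<open>finite S\<close> that set_M
      by (intro sum_strict_mono_ex1) (auto simp: Suc_le_eq)
    then show False using \<open>size M = card S\<close> set_M size_multiset_overloaded_eq[of M] by simp
  qed
  have "p = Polynomial.smult (lead_coeff p) (\<Prod>z\<in>#proots p. [:-z, 1:])"
    using complex_poly_decompose_multiset[of p] by simp
  then have "poly p x = (\<Prod>z\<in>#M. poly [:-z, 1:] x)"
    using monic M_def by (metis poly_prod_mset smult_1_left)
  also have "\<dots> = (\<Prod>z\<in>set_mset M. (poly [:-z, 1:] x) ^ count M z)"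
    by (rule image_prod_mset_multiplicity)
  also have "\<dots> = (\<Prod>z\<in>S. x - z)" using set_M simple by (intro prod.cong) auto
  finally show ?thesis unfolding S_def .
qed

lemma poly_of_int_poly_of_real:
  "poly (of_int_poly p :: complex poly) (of_real x) = of_real (poly (of_int_poly p) x)"
  by (induct p) (simp_all add: map_poly_pCons)

lemma monic_int_poly_root_bound:
  fixes p :: "int poly" and z :: complex
  assumes monic: "lead_coeff p = 1" and coeff_bound: "\<And>i. \<bar>coeff p i\<bar> \<le> H"
    and root: "poly (of_int_poly p) z = 0"
  shows "cmod z \<le> real (degree p) * H"
proof -
  define d where "d = degree p"
  have H1: "1 \<le> H" using coeff_bound[of "degree p"] monic by simp
  have "p \<noteq> 0" using monic by auto
  then have "degree (of_int_poly p :: complex poly) = d" unfolding d_def using monic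
    by (intro degree_map_poly) simp
  then have eval: "poly (of_int_poly p) z = (\<Sum>i\<le>d. of_int (coeff p i) * z ^ i)"
    by (simp add: poly_altdef coeff_map_poly)
  have "d \<noteq> 0"
    using int_poly_root_imp_degree_pos[OF \<open>p \<noteq> 0\<close> root] unfolding d_def by simp
  show ?thesis
  proof (cases "cmod z \<le> 1")
    case True
    have "1 * 1 \<le> real d * H" using \<open>d \<noteq> 0\<close> H1 by (intro mult_mono) auto
    with True show ?thesis unfolding d_def by linarith
  next
    case False
    have "{..d} = insert d {..<d}" by auto
    then have "z ^ d = - (\<Sum>i<d. of_int (coeff p i) * z ^ i)"
      using eval root monic unfolding d_def by (simp add: add_eq_0_iff2 add.commute)
    then have "cmod z ^ d = cmod (\<Sum>i<d. of_int (coeff p i) * z ^ i)"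
      by (metis norm_minus_cancel norm_power)
    also have "\<dots> \<le> (\<Sum>i<d. cmod (of_int (coeff p i) * z ^ i))" by (rule norm_sum)
    also have "\<dots> \<le> (\<Sum>i<d. H * cmod z ^ (d - 1))"
    proof (rule sum_mono)
      fix i assume "i \<in> {..<d}"
      then have "cmod z ^ i \<le> cmod z ^ (d - 1)" using False by (intro power_increasing) auto
      moreover have "\<bar>real_of_int (coeff p i)\<bar> \<le> H" using coeff_bound[of i] by simp
      ultimately show "cmod (of_int (coeff p i) * z ^ i) \<le> H * cmod z ^ (d - 1)"
        by (simp add: norm_mult norm_power mult_mono')
    qed
    also have "\<dots> = real d * H * cmod z ^ (d - 1)" by simp
    finally have "cmod z * cmod z ^ (d - 1) \<le> real d * H * cmod z ^ (d - 1)"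
      using \<open>d \<noteq> 0\<close> by (metis power_eq_if mult.commute)
    moreover have "0 < cmod z ^ (d - 1)" using False by (intro zero_less_power) linarith
    ultimately show ?thesis unfolding d_def by simp
  qed
qed

text \<open>Upper bound for the minimal polynomial of an algebraic integer of degree n+1 at a real
  point x: the first n linear factors are kept, the last one is estimated by Cauchy's bound.\<close>
lemma min_int_poly_value_bound:
  fixes x :: real and a :: "nat \<Rightarrow> complex"
  assumes alg: "algebraic_integer \<alpha>" and deg: "algebraic_degree \<alpha> = n + 1"
    and bij: "bij_betw a {1..n+1} (conjugates \<alpha>)"
  shows "\<bar>poly (of_int_poly (min_int_poly \<alpha>)) x\<bar>
           \<le> (\<Prod>i\<in>{1..n}. cmod (of_real x - a i)) * ((\<bar>x\<bar> + real (n+1)) * height \<alpha>)"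
proof -
  define P where "P = min_int_poly \<alpha>"
  define H where "H = real_of_int (height \<alpha>)"
  have monic: "lead_coeff P = 1" and degP: "degree P = n + 1"
    using min_int_poly_algebraic_integer(2)[OF alg] deg by (simp_all add: P_def algebraic_degree_def)
  have roots: "conjugates \<alpha> = {z. poly (of_int_poly P) z = 0}"
    unfolding conjugates_def P_def ..
  have "P \<noteq> 0" using monic by auto
  then have "degree (of_int_poly P :: complex poly) = n + 1" using degP monic
    by (subst degree_map_poly) simp_all
  moreover have "card (conjugates \<alpha>) = n + 1" using bij_betw_same_card[OF bij] by simp
  ultimately have factor_conj: "poly (of_int_poly P) z = (\<Prod>s\<in>conjugates \<alpha>. z - s)" for z
    unfolding roots using monic by (intro monic_poly_prod_distinct_roots) simp_all
  have factor: "poly (of_int_poly P) z = (\<Prod>i\<in>{1..n}. z - a i) * (z - a (n+1))" for z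
  proof -
    have "(\<Prod>s\<in>conjugates \<alpha>. z - s) = (\<Prod>i\<in>{1..n+1}. z - a i)"
      using prod.reindex_bij_betw[OF bij, of "\<lambda>s. z - s"] by simp
    also have "{1..n+1} = insert (n+1) {1..n}" by auto
    finally show ?thesis using factor_conj by (simp add: mult.commute)
  qed
  have H1: "1 \<le> H" using height_bounds(2)[OF alg] by (simp add: H_def)
  have "a (n+1) \<in> conjugates \<alpha>" using bij by (auto dest: bij_betwE)
  moreover have "\<bar>coeff P i\<bar> \<le> height \<alpha>" for i
    using height_bounds(1)[OF alg] by (simp add: P_def)
  ultimately have "cmod (a (n+1)) \<le> real (n+1) * H"
    using monic_int_poly_root_bound[OF monic] unfolding roots degP H_def by blast
  then have last: "cmod (of_real x - a (n+1)) \<le> (\<bar>x\<bar> + real (n+1)) * H"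
    using norm_triangle_ineq4[of "of_real x" "a (n+1)"] mult_left_mono[OF H1, of "\<bar>x\<bar>"]
    by (simp add: algebra_simps)
  have "\<bar>poly (of_int_poly P) x\<bar> = cmod (poly (of_int_poly P) (complex_of_real x))"
    by (simp add: poly_of_int_poly_of_real)
  also have "\<dots> = (\<Prod>i\<in>{1..n}. cmod (of_real x - a i)) * cmod (of_real x - a (n+1))"
    by (simp add: factor norm_mult prod_norm)
  also have "\<dots> \<le> (\<Prod>i\<in>{1..n}. cmod (of_real x - a i)) * ((\<bar>x\<bar> + real (n+1)) * H)"
    using last by (intro mult_left_mono) (auto intro: prod_nonneg)
  finally show ?thesis by (simp add: P_def H_def)
qed

lemma int_poly_reduce_mod_quadratic:
  fixes a b c :: int and f :: "int poly"
  assumes "degree f \<le> m"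
  shows "\<exists>A B :: int. \<forall>z :: real. of_int a * z^2 + of_int b * z + of_int c = 0 \<longrightarrow>
           of_int a ^ m * poly (of_int_poly f) z = of_int A + of_int B * z"
  using assms
proof (induction f arbitrary: m)
  case 0
  show ?case by (intro exI[of _ 0]) simp
next
  case (pCons d g)
  show ?case
  proof (cases "g = 0")
    case True
    show ?thesis
      by (rule exI[of _ "a ^ m * d"], rule exI[of _ 0]) (cases "d = 0"; simp add: True map_poly_pCons)
  next
    case False
    then obtain m' where m': "m = Suc m'" "degree g \<le> m'" using pCons.prems by (cases m) auto
    from pCons.IH[OF m'(2)] obtain A B :: int where AB:
      "\<And>z :: real. of_int a * z^2 + of_int b * z + of_int c = 0 \<Longrightarrow>
         of_int a ^ m' * poly (of_int_poly g) z = of_int A + of_int B * z" by blast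
    show ?thesis
    proof (rule exI[of _ "a ^ m * d - B * c"], rule exI[of _ "a * A - b * B"], intro allI impI)
      fix z :: real assume z: "of_int a * z^2 + of_int b * z + of_int c = 0"
      have "of_int a ^ m * poly (of_int_poly (pCons d g)) z
            = of_int a ^ m * of_int d + of_int a * z * (of_int a ^ m' * poly (of_int_poly g) z)"
        using False m'(1) by (simp add: map_poly_pCons algebra_simps)
      also have "\<dots> = of_int a ^ m * of_int d + of_int a * of_int A * z + of_int B * (of_int a * z^2)"
        using AB[OF z] by (simp add: algebra_simps power2_eq_square)
      also have "of_int a * z^2 = - of_int b * z - of_int c" using z by linarith
      finally show "of_int a ^ m * poly (of_int_poly (pCons d g)) z =
          of_int (a ^ m * d - B * c) + of_int (a * A - b * B) * z"
        by (simp add: algebra_simps)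
    qed
  qed
qed

lemma irrational_linear_form_nonzero:
  fixes x :: real and A B :: int
  assumes "x \<notin> \<rat>" and "B \<noteq> 0"
  shows "of_int A + of_int B * x \<noteq> 0"
proof
  assume "of_int A + of_int B * x = 0"
  then have "x = - of_int A / of_int B" using assms(2) by (simp add: field_simps)
  then show False using assms(1) by simp
qed

lemma quadratic_irrational_conjugate:
  assumes "quadratic_irrational \<xi>"
  obtains a b c :: int and \<eta> :: real
  where "a \<noteq> 0" "\<eta> \<notin> \<rat>"
    "of_int a * \<xi>^2 + of_int b * \<xi> + of_int c = 0"
    "of_int a * \<eta>^2 + of_int b * \<eta> + of_int c = 0"
    "of_int a * (\<xi> + \<eta>) = - of_int b" "of_int a * \<xi> * \<eta> = of_int c"
proof -
  from assms obtain Q :: "int poly" where deg: "degree Q = 2" and root: "poly (of_int_poly Q) \<xi> = 0"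
    and irr: "\<xi> \<notin> \<rat>" unfolding quadratic_irrational_def by blast
  define a b c where "a = coeff Q 2" and "b = coeff Q 1" and "c = coeff Q 0"
  have "Q \<noteq> 0" using deg by auto
  then have "a \<noteq> 0" using deg unfolding a_def by (metis leading_coeff_0_iff)
  then have a0: "real_of_int a \<noteq> 0" by simp
  have "degree (of_int_poly Q :: real poly) = 2" using deg by simp
  then have "poly (of_int_poly Q) \<xi> = (\<Sum>i\<le>2. of_int (coeff Q i) * \<xi> ^ i)"
    by (simp add: poly_altdef coeff_map_poly)
  then have root_\<xi>: "of_int a * \<xi>^2 + of_int b * \<xi> + of_int c = 0"
    using root by (simp add: a_def b_def c_def numeral_2_eq_2 atMost_Suc algebra_simps)
  define \<eta> where "\<eta> = - of_int b / of_int a - \<xi>"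
  have sum: "of_int a * (\<xi> + \<eta>) = - of_int b"
    unfolding \<eta>_def using a0 by (simp add: field_simps)
  have "of_int a * \<xi> * \<eta> = - of_int b * \<xi> - of_int a * \<xi>^2"
    unfolding \<eta>_def using a0 by (simp add: field_simps power2_eq_square)
  with root_\<xi> have prod: "of_int a * \<xi> * \<eta> = of_int c" by simp
  have "of_int a * \<eta>^2 + of_int b * \<eta> + of_int c = of_int a * \<xi>^2 + of_int b * \<xi> + of_int c"
    unfolding \<eta>_def using a0 by (simp add: field_simps power2_eq_square)
  with root_\<xi> have root_\<eta>: "of_int a * \<eta>^2 + of_int b * \<eta> + of_int c = 0" by simp
  have "\<eta> \<notin> \<rat>"
  proof
    assume "\<eta> \<in> \<rat>"
    then have "- of_int b / of_int a - \<eta> \<in> \<rat>" by simp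
    then show False using irr unfolding \<eta>_def by simp
  qed
  from that[OF \<open>a \<noteq> 0\<close> this root_\<xi> root_\<eta> sum prod] show thesis .
qed

lemma conjugate_norm_form:
  fixes \<xi> \<eta> :: real and a b c A B :: int
  assumes sum: "of_int a * (\<xi> + \<eta>) = - of_int b" and prod: "of_int a * \<xi> * \<eta> = of_int c"
  shows "of_int a * ((of_int A + of_int B * \<xi>) * (of_int A + of_int B * \<eta>))
           = real_of_int (a * A^2 - b * A * B + c * B^2)"
proof -
  have "of_int a * ((of_int A + of_int B * \<xi>) * (of_int A + of_int B * \<eta>))
      = of_int a * of_int A ^ 2 + of_int A * of_int B * (of_int a * (\<xi> + \<eta>))
        + of_int B ^ 2 * (of_int a * \<xi> * \<eta>)"
    by (simp add: algebra_simps power2_eq_square)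
  also have "\<dots> = real_of_int (a * A^2 - b * A * B + c * B^2)"
    unfolding sum prod by (simp add: algebra_simps)
  finally show ?thesis .
qed

text \<open>Liouville-type norm bound: if an integer polynomial of degree at most m does not vanish
  at the quadratic irrational \<xi>, then a^(2m+1) P(\<xi>) P(\<eta>) is a nonzero integer, namely the
  value of the binary quadratic form a A^2 - b A B + c B^2 at the reduction A + B z of P.\<close>
lemma quadratic_irrational_norm_bound:
  assumes "quadratic_irrational \<xi>"
  obtains a :: int and \<eta> :: real where "a \<noteq> 0"
    "\<And>P m. degree P \<le> m \<Longrightarrow> poly (of_int_poly P) \<xi> \<noteq> 0 \<Longrightarrow>
       1 \<le> \<bar>real_of_int a\<bar> ^ (2*m+1) * (\<bar>poly (of_int_poly P) \<xi>\<bar> * \<bar>poly (of_int_poly P) \<eta>\<bar>)"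
proof -
  obtain a b c :: int and \<eta> :: real where a0: "a \<noteq> 0" and irr_\<eta>: "\<eta> \<notin> \<rat>"
    and root_\<xi>: "of_int a * \<xi>^2 + of_int b * \<xi> + of_int c = 0"
    and root_\<eta>: "of_int a * \<eta>^2 + of_int b * \<eta> + of_int c = 0"
    and sum: "of_int a * (\<xi> + \<eta>) = - of_int b" and prod: "of_int a * \<xi> * \<eta> = of_int c"
    by (rule quadratic_irrational_conjugate[OF assms])
  have irr_\<xi>: "\<xi> \<notin> \<rat>" using assms unfolding quadratic_irrational_def by blast
  have "1 \<le> \<bar>real_of_int a\<bar> ^ (2*m+1) * (\<bar>poly (of_int_poly P) \<xi>\<bar> * \<bar>poly (of_int_poly P) \<eta>\<bar>)"
    if deg: "degree P \<le> m" and nonroot: "poly (of_int_poly P) \<xi> \<noteq> 0" for P m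
  proof -
    obtain A B :: int where AB: "\<And>z :: real. of_int a * z^2 + of_int b * z + of_int c = 0 \<Longrightarrow>
        of_int a ^ m * poly (of_int_poly P) z = of_int A + of_int B * z"
      using int_poly_reduce_mod_quadratic[OF deg, of a b c] by blast
    have nonzero: "of_int A + of_int B * \<xi> \<noteq> (0::real) \<and> of_int A + of_int B * \<eta> \<noteq> (0::real)"
    proof (cases "B = 0")
      case True
      then show ?thesis using AB[OF root_\<xi>] nonroot a0 by auto
    next
      case False
      then show ?thesis using irrational_linear_form_nonzero irr_\<xi> irr_\<eta> by blast
    qed
    define N where "N = a * A^2 - b * A * B + c * B^2"
    have norm: "of_int a * ((of_int A + of_int B * \<xi>) * (of_int A + of_int B * \<eta>)) = real_of_int N"
      unfolding N_def by (rule conjugate_norm_form[OF sum prod])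
    with nonzero a0 have "N \<noteq> 0" by auto
    then have "1 \<le> \<bar>real_of_int N\<bar>" by linarith
    also have "real_of_int N
        = of_int a * (of_int a ^ m * poly (of_int_poly P) \<xi>) * (of_int a ^ m * poly (of_int_poly P) \<eta>)"
      using norm AB[OF root_\<xi>] AB[OF root_\<eta>] by simp
    also have "\<bar>\<dots>\<bar> = \<bar>real_of_int a\<bar> ^ (2*m+1) * (\<bar>poly (of_int_poly P) \<xi>\<bar> * \<bar>poly (of_int_poly P) \<eta>\<bar>)"
    proof -
      have pow: "x ^ (2*m+1) = x * (x^m * x^m)" for x :: real by (simp add: mult_2 power_add)
      show ?thesis by (simp only: pow) (simp add: abs_mult power_abs algebra_simps)
    qed
    finally show ?thesis .
  qed
  with that a0 show thesis by blast
qed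

lemma lower_bound_from_power_inequality:
  fixes \<delta> D E K H :: real and n :: nat
  assumes n: "n \<ge> 1" and \<delta>: "0 \<le> \<delta>" and D: "0 \<le> D" and E: "0 < E" and K: "0 < K"
    and H: "1 \<le> H" and ineq: "K \<le> \<delta> ^ n * (D + \<delta>) ^ n * E * H^2"
  shows "min 1 ((K / ((D + 1) ^ n * E)) powr (1 / n)) * H powr (- 2 / n) \<le> \<delta>"
proof -
  define C where "C = K / ((D + 1) ^ n * E)"
  have C: "C > 0" unfolding C_def using K D E by simp
  have "H powr (- 2 / n) \<le> H powr 0" using H n by (intro powr_mono) auto
  then have H_pow: "H powr (- 2 / n) \<le> 1" using H by simp
  have "min 1 (C powr (1 / n)) * H powr (- 2 / n) \<le> \<delta>"
  proof (cases "\<delta> \<ge> 1")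
    case True
    have "min 1 (C powr (1 / n)) * H powr (- 2 / n) \<le> 1 * 1"
      using H_pow by (intro mult_mono) auto
    with True show ?thesis by simp
  next
    case False
    have "(D + \<delta>) ^ n \<le> (D + 1) ^ n" using False \<delta> D by (intro power_mono) auto
    then have "K \<le> \<delta> ^ n * (D + 1) ^ n * E * H^2"
      using ineq \<delta> E by (smt (verit) mult_left_mono mult_right_mono zero_le_power
        zero_le_power2 mult_nonneg_nonneg)
    then have C_le: "C * H powr (-2) \<le> \<delta> ^ n"
      unfolding C_def using E D H by (simp add: field_simps powr_minus powr_realpow)
    have "C * H powr (-2) > 0" using C H by simp
    moreover have "\<delta> ^ n = 0" if "\<delta> = 0" using that n by simp
    ultimately have "\<delta> > 0" using C_le \<delta> by (metis less_eq_real_def not_le)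
    have "(C * H powr (-2)) powr (1 / n) \<le> (\<delta> ^ n) powr (1 / n)"
      using C_le C H by (intro powr_mono2) auto
    also have "(\<delta> ^ n) powr (1 / n) = \<delta>"
      using \<open>\<delta> > 0\<close> n by (simp add: powr_realpow[symmetric] powr_powr)
    also have "(C * H powr (-2)) powr (1 / n) = C powr (1 / n) * H powr (- 2 / n)"
      using C H by (simp add: powr_mult powr_powr)
    finally have "C powr (1 / n) * H powr (- 2 / n) \<le> \<delta>" .
    moreover have "min 1 (C powr (1 / n)) * H powr (- 2 / n) \<le> C powr (1 / n) * H powr (- 2 / n)"
      by (intro mult_right_mono) auto
    ultimately show ?thesis by linarith
  qed
  then show ?thesis unfolding C_def .
qed

text \<open>If the conjugates a 1, ..., a n lie within \<delta> of \<xi>, they lie within |\<xi> - \<eta>| + \<delta>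
  of \<eta>; together with the value bound this estimates the product of the values of the
  minimal polynomial at \<xi> and \<eta>.\<close>
lemma min_int_poly_two_point_bound:
  fixes \<xi> \<eta> \<delta> :: real and a :: "nat \<Rightarrow> complex"
  assumes alg: "algebraic_integer \<alpha>" and deg: "algebraic_degree \<alpha> = n + 1"
    and bij: "bij_betw a {1..n+1} (conjugates \<alpha>)"
    and close: "\<And>i. i \<in> {1..n} \<Longrightarrow> cmod (of_real \<xi> - a i) \<le> \<delta>"
  shows "\<bar>poly (of_int_poly (min_int_poly \<alpha>)) \<xi>\<bar> * \<bar>poly (of_int_poly (min_int_poly \<alpha>)) \<eta>\<bar>
           \<le> \<delta> ^ n * (\<bar>\<xi> - \<eta>\<bar> + \<delta>) ^ n * ((\<bar>\<xi>\<bar> + real (n+1)) * (\<bar>\<eta>\<bar> + real (n+1)))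
             * height \<alpha> ^ 2"
proof -
  let ?P = "of_int_poly (min_int_poly \<alpha>) :: real poly"
  have close_\<eta>: "cmod (of_real \<eta> - a i) \<le> \<bar>\<xi> - \<eta>\<bar> + \<delta>" if "i \<in> {1..n}" for i
  proof -
    have "cmod (of_real \<eta> - a i) \<le> cmod (of_real (\<eta> - \<xi>)) + cmod (of_real \<xi> - a i)"
      using norm_triangle_ineq[of "of_real (\<eta> - \<xi>)" "of_real \<xi> - a i"] by simp
    then show ?thesis using close[OF that] by (simp add: abs_minus_commute flip: of_real_diff)
  qed
  have "(\<Prod>i\<in>{1..n}. cmod (of_real \<xi> - a i)) \<le> \<delta> ^ n"
    using prod_mono[of "{1..n}" "\<lambda>i. cmod (of_real \<xi> - a i)" "\<lambda>_. \<delta>"] close by simp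
  then have bound_\<xi>: "\<bar>poly ?P \<xi>\<bar> \<le> \<delta> ^ n * ((\<bar>\<xi>\<bar> + real (n+1)) * height \<alpha>)"
    using min_int_poly_value_bound[OF alg deg bij, of \<xi>] height_bounds(2)[OF alg]
    by (smt (verit) mult_right_mono of_int_nonneg zero_le_mult_iff abs_ge_zero of_nat_0_le_iff)
  have "(\<Prod>i\<in>{1..n}. cmod (of_real \<eta> - a i)) \<le> (\<bar>\<xi> - \<eta>\<bar> + \<delta>) ^ n"
    using prod_mono[of "{1..n}" "\<lambda>i. cmod (of_real \<eta> - a i)" "\<lambda>_. \<bar>\<xi> - \<eta>\<bar> + \<delta>"] close_\<eta>
    by simp
  then have bound_\<eta>: "\<bar>poly ?P \<eta>\<bar> \<le> (\<bar>\<xi> - \<eta>\<bar> + \<delta>) ^ n * ((\<bar>\<eta>\<bar> + real (n+1)) * height \<alpha>)"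
    using min_int_poly_value_bound[OF alg deg bij, of \<eta>] height_bounds(2)[OF alg]
    by (smt (verit) mult_right_mono of_int_nonneg zero_le_mult_iff abs_ge_zero of_nat_0_le_iff)
  have "\<bar>poly ?P \<xi>\<bar> * \<bar>poly ?P \<eta>\<bar>
        \<le> (\<delta> ^ n * ((\<bar>\<xi>\<bar> + real (n+1)) * height \<alpha>))
           * ((\<bar>\<xi> - \<eta>\<bar> + \<delta>) ^ n * ((\<bar>\<eta>\<bar> + real (n+1)) * height \<alpha>))"
    using bound_\<xi> bound_\<eta> by (intro mult_mono) auto
  then show ?thesis by (simp add: algebra_simps power2_eq_square)
qed

theorem mainTheorem7:
  fixes \<xi> :: real and n :: nat
  assumes "quadratic_irrational \<xi>" and "n \<ge> 1"
  shows "\<exists>c > 0. \<forall>\<alpha> :: complex. \<forall>a :: nat \<Rightarrow> complex.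
           algebraic_integer \<alpha> \<and> algebraic_degree \<alpha> = n + 1 \<and>
           complex_of_real \<xi> \<notin> conjugates \<alpha> \<and>
           bij_betw a {1..n+1} (conjugates \<alpha>) \<longrightarrow>
           (MAX i\<in>{1..n}. cmod (complex_of_real \<xi> - a i))
             \<ge> c * real_of_int (height \<alpha>) powr (- 2 / real n)"
proof -
  obtain q :: int and \<eta> :: real where "q \<noteq> 0" and norm_bound:
    "\<And>P m. degree P \<le> m \<Longrightarrow> poly (of_int_poly P) \<xi> \<noteq> 0 \<Longrightarrow>
       1 \<le> \<bar>real_of_int q\<bar> ^ (2*m+1) * (\<bar>poly (of_int_poly P) \<xi>\<bar> * \<bar>poly (of_int_poly P) \<eta>\<bar>)"
    using quadratic_irrational_norm_bound[OF assms(1)] by blast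
  define D E K where "D = \<bar>\<xi> - \<eta>\<bar>" and "E = (\<bar>\<xi>\<bar> + real (n+1)) * (\<bar>\<eta>\<bar> + real (n+1))"
    and "K = 1 / \<bar>real_of_int q\<bar> ^ (2*(n+1)+1)"
  have pos: "0 \<le> D" "0 < E" "0 < K" using \<open>q \<noteq> 0\<close> by (auto simp: D_def E_def K_def)
  define c where "c = min 1 ((K / ((D + 1) ^ n * E)) powr (1 / n))"
  have "c * height \<alpha> powr (- 2 / n) \<le> (MAX i\<in>{1..n}. cmod (of_real \<xi> - a i))"
    if alg: "algebraic_integer \<alpha>" and deg: "algebraic_degree \<alpha> = n + 1"
      and not_conj: "complex_of_real \<xi> \<notin> conjugates \<alpha>"
      and bij: "bij_betw a {1..n+1} (conjugates \<alpha>)" for \<alpha> a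
  proof -
    define \<delta> where "\<delta> = (MAX i\<in>{1..n}. cmod (of_real \<xi> - a i))"
    have close: "cmod (of_real \<xi> - a i) \<le> \<delta>" if "i \<in> {1..n}" for i
      unfolding \<delta>_def using that by (intro Max_ge) auto
    have "0 \<le> \<delta>" using close[of 1] assms(2) by (meson atLeastAtMost_iff norm_ge_zero order_trans order_refl)
    have "poly (of_int_poly (min_int_poly \<alpha>)) \<xi> \<noteq> (0::real)"
      using not_conj poly_of_int_poly_of_real[of "min_int_poly \<alpha>" \<xi>] by (auto simp: conjugates_def)
    then have "K \<le> \<bar>poly (of_int_poly (min_int_poly \<alpha>)) \<xi>\<bar> * \<bar>poly (of_int_poly (min_int_poly \<alpha>)) \<eta>\<bar>"
      using norm_bound[of "min_int_poly \<alpha>" "n+1"] deg \<open>q \<noteq> 0\<close>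
      by (simp add: K_def algebraic_degree_def field_simps)
    also have "\<dots> \<le> \<delta> ^ n * (D + \<delta>) ^ n * E * height \<alpha> ^ 2"
      unfolding D_def E_def by (rule min_int_poly_two_point_bound[OF alg deg bij close])
    finally show ?thesis
      unfolding c_def \<delta>_def[symmetric] using height_bounds(2)[OF alg] pos \<open>0 \<le> \<delta>\<close> assms(2)
      by (intro lower_bound_from_power_inequality) auto
  qed
  moreover have "c > 0" using pos by (simp add: c_def)
  ultimately show ?thesis by blast
qed

end
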